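(* Let $N$ be a finite set, $r\notin N$, $V=N\cup\{r\}$, and let $G=(V,E)$ be the complete graph on $V$ with edge weights $w:E\to\mathbb{R}$ taking the distinct values $w_1<\dots<w_k$. Then the graphs $G_i$, $i<k$, contain no bad holes and no bad induced diamonds if and only if the graphs $G_i$, $i<k$, contain no violated cycles.
   Context: $E_i=\{e\in E:w(e)\le w_i\}$, $G_i=(V,E_i)$. A hole is an induced cycle with at least four vertices; a hole in $G_i$ is bad if it contains a vertex $x\neq r$ with $rx\notin E_i$. A diamond is $K_4$ minus one edge; its tips are its two vertices of degree 2. For a cycle $C$ and a chord $f=xy$ of $C$, with $P_1,P_2$ the two $x$-$y$ paths of $C$, $f$ covers $C$ if $w(f)\ge w(e)$ for all $e\in E(P_1)$ or for all $e\in E(P_2)$; $C$ is well-covered if covered by all its chords (chords taken in the graph $G_i$ under consideration). An induced diamond in $G_i$ is bad if its Hamiltonian cycle is well-covered and at least one tip $x\ne r$ satisfies $rx\notin E_i$. A violated cycle in $G_i$ is a well-covered cycle of $G_i$ that contains two vertices non-adjacent in $G_i$ and contains a vertex $x\ne r$ with $rx\notin E_i$. *)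

theory Defs
  imports Complex_Main
begin

text \<open>Vertices have type 'a; the edge weight of the complete graph on V is a
symmetric function w. G_i is given by its adjacency relation.\<close>

definition weight_values :: "'a set \<Rightarrow> ('a \<Rightarrow> 'a \<Rightarrow> real) \<Rightarrow> real set" where
  "weight_values V w = {w x y | x y. x \<in> V \<and> y \<in> V \<and> x \<noteq> y}"

text \<open>w_i, 1-based: the i-th smallest distinct weight value.\<close>
definition wval :: "'a set \<Rightarrow> ('a \<Rightarrow> 'a \<Rightarrow> real) \<Rightarrow> nat \<Rightarrow> real" where
  "wval V w i = sorted_list_of_set (weight_values V w) ! (i - 1)"

definition Gadj :: "'a set \<Rightarrow> ('a \<Rightarrow> 'a \<Rightarrow> real) \<Rightarrow> nat \<Rightarrow> 'a \<Rightarrow> 'a \<Rightarrow> bool" where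
  "Gadj V w i x y \<longleftrightarrow> x \<in> V \<and> y \<in> V \<and> x \<noteq> y \<and> w x y \<le> wval V w i"

definition is_cycle :: "('a \<Rightarrow> 'a \<Rightarrow> bool) \<Rightarrow> 'a list \<Rightarrow> bool" where
  "is_cycle A xs \<longleftrightarrow> length xs \<ge> 3 \<and> distinct xs \<and>
     (\<forall>j < length xs. A (xs ! j) (xs ! ((j + 1) mod length xs)))"

definition is_hole :: "('a \<Rightarrow> 'a \<Rightarrow> bool) \<Rightarrow> 'a list \<Rightarrow> bool" where
  "is_hole A xs \<longleftrightarrow> is_cycle A xs \<and> length xs \<ge> 4 \<and>
     (\<forall>j k. j < length xs \<and> k < length xs \<and> A (xs ! j) (xs ! k) \<longrightarrow>
        k = (j + 1) mod length xs \<or> j = (k + 1) mod length xs)"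

definition is_chord :: "('a \<Rightarrow> 'a \<Rightarrow> bool) \<Rightarrow> 'a list \<Rightarrow> nat \<Rightarrow> nat \<Rightarrow> bool" where
  "is_chord A xs a b \<longleftrightarrow> a < b \<and> b < length xs \<and> A (xs ! a) (xs ! b) \<and>
     b \<noteq> a + 1 \<and> \<not> (a = 0 \<and> b = length xs - 1)"

definition covers :: "('a \<Rightarrow> 'a \<Rightarrow> real) \<Rightarrow> 'a list \<Rightarrow> nat \<Rightarrow> nat \<Rightarrow> bool" where
  "covers w xs a b \<longleftrightarrow>
     (\<forall>j. a \<le> j \<and> j < b \<longrightarrow> w (xs ! j) (xs ! (j + 1)) \<le> w (xs ! a) (xs ! b)) \<or>
     (\<forall>j. (j < a \<or> b \<le> j) \<and> j < length xs \<longrightarrow>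
        w (xs ! j) (xs ! ((j + 1) mod length xs)) \<le> w (xs ! a) (xs ! b))"

definition well_covered :: "('a \<Rightarrow> 'a \<Rightarrow> bool) \<Rightarrow> ('a \<Rightarrow> 'a \<Rightarrow> real) \<Rightarrow> 'a list \<Rightarrow> bool" where
  "well_covered A w xs \<longleftrightarrow> (\<forall>a b. is_chord A xs a b \<longrightarrow> covers w xs a b)"

definition bad_hole :: "('a \<Rightarrow> 'a \<Rightarrow> bool) \<Rightarrow> 'a \<Rightarrow> 'a list \<Rightarrow> bool" where
  "bad_hole A r xs \<longleftrightarrow> is_hole A xs \<and> (\<exists>x \<in> set xs. x \<noteq> r \<and> \<not> A r x)"

text \<open>Induced diamond with tips a, c and Hamiltonian cycle a-b-c-d-a.\<close>
definition induced_diamond :: "('a \<Rightarrow> 'a \<Rightarrow> bool) \<Rightarrow> 'a \<Rightarrow> 'a \<Rightarrow> 'a \<Rightarrow> 'a \<Rightarrow> bool" where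
  "induced_diamond A a b c d \<longleftrightarrow> distinct [a, b, c, d] \<and>
     A a b \<and> A b c \<and> A c d \<and> A d a \<and> A b d \<and> \<not> A a c"

definition bad_diamond :: "('a \<Rightarrow> 'a \<Rightarrow> bool) \<Rightarrow> ('a \<Rightarrow> 'a \<Rightarrow> real) \<Rightarrow> 'a \<Rightarrow> 'a \<Rightarrow> 'a \<Rightarrow> 'a \<Rightarrow> 'a \<Rightarrow> bool" where
  "bad_diamond A w r a b c d \<longleftrightarrow> induced_diamond A a b c d \<and> well_covered A w [a, b, c, d] \<and>
     ((a \<noteq> r \<and> \<not> A r a) \<or> (c \<noteq> r \<and> \<not> A r c))"

definition violated_cycle :: "('a \<Rightarrow> 'a \<Rightarrow> bool) \<Rightarrow> ('a \<Rightarrow> 'a \<Rightarrow> real) \<Rightarrow> 'a \<Rightarrow> 'a list \<Rightarrow> bool" where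
  "violated_cycle A w r xs \<longleftrightarrow> is_cycle A xs \<and> well_covered A w xs \<and>
     (\<exists>x \<in> set xs. \<exists>y \<in> set xs. x \<noteq> y \<and> \<not> A x y) \<and>
     (\<exists>x \<in> set xs. x \<noteq> r \<and> \<not> A r x)"

end

theory Submission
  imports Defs
begin

(*
  A bad hole has no chords, so it is trivially well covered, and the Hamiltonian cycle of a
  bad diamond is well covered by definition; both are therefore violated cycles.

  Conversely, assume that no G_i contains a bad hole or a bad diamond, and take a shortest
  violated cycle C over all levels i. Lowering i to the level of the heaviest edge of C keeps C
  violated, after which no edge of G_i is heavier than that edge; rotate C so that its last
  vertex x is not adjacent to r. By minimality, every shorter well-covered cycle through x is a
  clique. A chord at x splits C into two shorter cycles through x, and the one avoiding the
  heaviest edge is well covered; so x lies on a triangle of three consecutive vertices of C.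
  The same holds if x has no chord, unless its two neighbours are non-adjacent, in which case
  x lies on a bad hole. Finally, let q z p be consecutive on C with pq an edge and one of them
  not adjacent to r. Deleting z leaves a cycle closed by pq. At a suitable level it is well
  covered (otherwise a lighter chord cuts off a shorter violated cycle through p, q and z), and
  its minimality yields a bad diamond on z, p, q and a fourth vertex, or a bad hole through r.
*)

section \<open>Cycles, chords and holes\<close>

lemma add_mod_self_left_less: "a < n \<Longrightarrow> (n + a) mod n = (a::nat)"
  by (simp add: mod_add_self1)

lemma is_cycle_edge:
  assumes "is_cycle A xs" "j < length xs"
  shows "A (xs ! j) (xs ! (Suc j mod length xs))"
  using assms unfolding is_cycle_def by simp

lemma is_cycle_edge_Suc:
  assumes "is_cycle A xs" "Suc j < length xs"
  shows "A (xs ! j) (xs ! Suc j)"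
  using is_cycle_edge[OF assms(1), of j] assms(2) by simp

lemma is_cycle_edge_last:
  assumes "is_cycle A xs"
  shows "A (xs ! (length xs - 1)) (xs ! 0)"
proof -
  have "3 \<le> length xs" using assms unfolding is_cycle_def by simp
  then have "length xs - 1 < length xs" "Suc (length xs - 1) = length xs" by linarith+
  then show ?thesis using is_cycle_edge[OF assms, of "length xs - 1"] by simp
qed

lemma is_cycle_rotate:
  assumes "is_cycle A xs"
  shows "is_cycle A (rotate n xs)"
proof -
  let ?L = "length xs"
  have "A (rotate n xs ! j) (rotate n xs ! (Suc j mod ?L))" if j: "j < ?L" for j
  proof -
    have "0 < ?L" using j by linarith
    have "A (xs ! ((n + j) mod ?L)) (xs ! (Suc ((n + j) mod ?L) mod ?L))"
      using \<open>0 < ?L\<close> by (intro is_cycle_edge[OF assms]) simp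
    moreover have "Suc ((n + j) mod ?L) mod ?L = (n + Suc j mod ?L) mod ?L"
      by (simp add: mod_simps)
    ultimately show ?thesis using j \<open>0 < ?L\<close> by (simp add: nth_rotate)
  qed
  then show ?thesis using assms unfolding is_cycle_def by simp
qed

lemma is_cycle_take:
  assumes "distinct E" "2 \<le> n" "n < length E"
    and "\<And>j. j < n \<Longrightarrow> A (E ! j) (E ! Suc j)" and "A (E ! n) (E ! 0)"
  shows "is_cycle A (take (Suc n) E)"
proof -
  have "A (take (Suc n) E ! j) (take (Suc n) E ! (Suc j mod Suc n))" if "j < Suc n" for j
  proof (cases "j < n")
    case True
    then show ?thesis using assms(4) by simp
  next
    case False
    then have "j = n" using that by simp
    then show ?thesis using assms(5) by simp
  qed
  then show ?thesis using assms(1-3) unfolding is_cycle_def by simp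
qed

lemma is_cycle_take_closed:
  assumes "is_cycle A E" "2 \<le> n" "n < length E" "A (E ! n) (E ! 0)"
  shows "is_cycle A (take (Suc n) E)"
proof (rule is_cycle_take)
  show "distinct E" using assms(1) unfolding is_cycle_def by simp
  show "A (E ! j) (E ! Suc j)" if "j < n" for j
    using is_cycle_edge[OF assms(1), of j] that assms(3) by simp
qed (use assms in auto)

lemma nth_mem_take_rotate:
  assumes "j \<le> n" "n < length D"
  shows "D ! ((a + j) mod length D) \<in> set (take (Suc n) (rotate a D))"
proof -
  have "take (Suc n) (rotate a D) ! j = D ! ((a + j) mod length D)"
    using assms by (simp add: nth_rotate)
  moreover have "j < length (take (Suc n) (rotate a D))" using assms by simp
  ultimately show ?thesis by (metis nth_mem)
qed

text \<open>The chord between positions \<open>a < b\<close> splits \<open>D\<close> into the cycles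
  \<open>D!a, \<dots>, D!b\<close> and \<open>D!b, \<dots>, D!(length D - 1), D!0, \<dots>, D!a\<close>.\<close>

lemma is_cycle_chord_arcs:
  assumes cyc: "is_cycle A D" and ch: "is_chord A D a b" and sym: "\<And>x y. A x y \<Longrightarrow> A y x"
  shows "is_cycle A (take (Suc (b - a)) (rotate a D))"
    and "is_cycle A (take (Suc (length D - b + a)) (rotate b D))"
proof -
  have ab: "a < b" "b < length D" "A (D ! a) (D ! b)" "b \<noteq> a + 1" "\<not> (a = 0 \<and> b = length D - 1)"
    using ch unfolding is_chord_def by auto
  have L: "0 < length D" using ab by linarith
  have "rotate a D ! (b - a) = D ! b" "rotate a D ! 0 = D ! a"
    using ab L by (simp_all add: nth_rotate)
  then show "is_cycle A (take (Suc (b - a)) (rotate a D))"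
    using is_cycle_rotate[OF cyc] ab sym by (intro is_cycle_take_closed) auto
  have "(b + (length D - b + a)) mod length D = a"
    using ab by (simp add: mod_if)
  then have "rotate b D ! (length D - b + a) = D ! a" "rotate b D ! 0 = D ! b"
    using ab L by (simp_all add: nth_rotate)
  then show "is_cycle A (take (Suc (length D - b + a)) (rotate b D))"
    using is_cycle_rotate[OF cyc] ab by (intro is_cycle_take_closed) auto
qed

lemma nth_mem_chord_arcs:
  assumes ch: "is_chord A D a b" and t: "t < length D"
  shows "D ! t \<in> set (take (Suc (b - a)) (rotate a D)) \<or>
    D ! t \<in> set (take (Suc (length D - b + a)) (rotate b D))"
proof -
  have ab: "a < b" "b < length D" using ch unfolding is_chord_def by auto
  consider "a \<le> t" "t \<le> b" | "b \<le> t" | "t < a" by linarith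
  then show ?thesis
  proof cases
    case 1
    then show ?thesis using nth_mem_take_rotate[of "t - a" "b - a" D a] ab t by simp
  next
    case 2
    then show ?thesis using nth_mem_take_rotate[of "t - b" "length D - b + a" D b] ab t by simp
  next
    case 3
    moreover have "b + (length D - b + t) = length D + t" using ab by simp
    ultimately show ?thesis
      using nth_mem_take_rotate[of "length D - b + t" "length D - b + a" D b] ab t
      by simp
  qed
qed

lemma is_cycle_length_3:
  assumes "is_cycle A xs" "length xs = 3" "\<And>x y. A x y \<Longrightarrow> A y x"
    and "x \<in> set xs" "y \<in> set xs" "x \<noteq> y"
  shows "A x y"
proof -
  obtain u v t where xs: "xs = [u, v, t]"
    using assms(2) by (auto simp: numeral_3_eq_3 length_Suc_conv)
  have "A u v" "A v t" "A t u"
    using is_cycle_edge[OF assms(1), of 0] is_cycle_edge[OF assms(1), of 1]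
      is_cycle_edge[OF assms(1), of 2] by (simp_all add: xs)
  then show ?thesis using assms(3-6) by (auto simp: xs)
qed

lemma is_cycle_length_3_triangle:
  assumes "is_cycle A D" "length D = 3" "\<And>x y. A x y \<Longrightarrow> A y x" "x \<in> set D"
  obtains y z where "y \<in> set D" "z \<in> set D" "A x y" "A x z" "A y z"
proof -
  obtain u v t where D: "D = [u, v, t]"
    using assms(2) by (auto simp: numeral_3_eq_3 length_Suc_conv)
  have "distinct D" using assms(1) unfolding is_cycle_def by simp
  then obtain y z where "y \<in> set D" "z \<in> set D" "distinct [x, y, z]"
    using assms(4) unfolding D by auto
  then show ?thesis using that is_cycle_length_3[OF assms(1-3)] assms(4)
    by (metis distinct_length_2_or_more)
qed

lemma chord_if_not_hole:
  assumes cyc: "is_cycle A D" and "\<not> is_hole A D" "4 \<le> length D"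
    and sym: "\<And>x y. A x y \<Longrightarrow> A y x" and irrefl: "\<And>x. \<not> A x x"
  obtains a b where "is_chord A D a b"
proof -
  obtain j k where jk: "j < length D" "k < length D" "A (D ! j) (D ! k)"
    "\<not> (k = (j + 1) mod length D \<or> j = (k + 1) mod length D)"
    using assms(1-3) unfolding is_hole_def by auto
  have "j \<noteq> k" using jk(3) irrefl by auto
  have chord: "is_chord A D u v" if "u < v" "v < length D" "A (D ! u) (D ! v)"
    "v \<noteq> (u + 1) mod length D" "u \<noteq> (v + 1) mod length D" for u v
  proof -
    have "\<not> (u = 0 \<and> v = length D - 1)"
      using that(2,5) by (metis Suc_diff_1 Suc_eq_plus1 gr_zeroI less_nat_zero_code mod_self)
    then show ?thesis using that(1-4) unfolding is_chord_def by simp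
  qed
  show ?thesis
  proof (cases "j < k")
    case True
    then show ?thesis using chord[of j k] that jk by simp
  next
    case False
    then show ?thesis using chord[of k j] that jk sym \<open>j \<noteq> k\<close> by simp
  qed
qed

lemma hole_through_vertex:
  assumes sym: "\<And>x y. A x y \<Longrightarrow> A y x" and irrefl: "\<And>x. \<not> A x x"
  shows "is_cycle A D \<Longrightarrow> x \<in> set D \<Longrightarrow> (\<forall>y\<in>set D. \<forall>z\<in>set D. A x y \<longrightarrow> A x z \<longrightarrow> \<not> A y z)
    \<Longrightarrow> \<exists>H. is_hole A H \<and> x \<in> set H"
proof (induction "length D" arbitrary: D rule: less_induct)
  case less
  show ?case
  proof (cases "is_hole A D")
    case False
    have "length D \<noteq> 3"
      using is_cycle_length_3_triangle[OF less.prems(1) _ sym less.prems(2)] less.prems(3) by metis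
    then have "4 \<le> length D" using less.prems(1) unfolding is_cycle_def by simp
    then obtain a b where ch: "is_chord A D a b"
      using chord_if_not_hole[OF less.prems(1) False _ sym irrefl] by blast
    have recurse: "\<exists>H. is_hole A H \<and> x \<in> set H"
      if "is_cycle A (take (Suc n) (rotate k D))" "n + 1 < length D"
        "x \<in> set (take (Suc n) (rotate k D))"
      for n k
    proof (rule less.hyps)
      have "set (take (Suc n) (rotate k D)) \<subseteq> set D" by (metis set_rotate set_take_subset)
      then show "\<forall>y\<in>set (take (Suc n) (rotate k D)). \<forall>z\<in>set (take (Suc n) (rotate k D)).
          A x y \<longrightarrow> A x z \<longrightarrow> \<not> A y z"
        using less.prems(3) by blast
    qed (use that in simp_all)
    have "b - a + 1 < length D" "length D - b + a + 1 < length D"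
      using ch unfolding is_chord_def by auto
    moreover obtain t where "t < length D" "D ! t = x"
      using less.prems(2) unfolding in_set_conv_nth by blast
    ultimately show ?thesis
      using nth_mem_chord_arcs[OF ch] recurse is_cycle_chord_arcs[OF less.prems(1) ch sym] by metis
  qed (use less.prems in blast)
qed

lemma less_4_cases:
  assumes "(j::nat) < 4"
  obtains "j = 0" | "j = 1" | "j = 2" | "j = 3"
  using assms by linarith

lemma is_cycle_4:
  assumes "distinct [a, b, c, d]" "A a b" "A b c" "A c d" "A d a"
  shows "is_cycle A [a, b, c, d]"
proof -
  have "A ([a, b, c, d] ! j) ([a, b, c, d] ! (Suc j mod 4))" if "j < 4" for j
    using that by (cases rule: less_4_cases) (simp_all add: assms)
  then show ?thesis using assms(1) unfolding is_cycle_def by simp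
qed

lemma is_hole_4:
  assumes "distinct [a, b, c, d]" "A a b" "A b c" "A c d" "A d a" "\<not> A a c" "\<not> A b d"
    and sym: "\<And>x y. A x y \<Longrightarrow> A y x" and irrefl: "\<And>x. \<not> A x x"
  shows "is_hole A [a, b, c, d]"
proof -
  have "\<not> A c a" "\<not> A d b" using assms(6,7) sym by blast+
  then have "k = Suc j mod 4 \<or> j = Suc k mod 4"
    if "j < 4" "k < 4" "A ([a, b, c, d] ! j) ([a, b, c, d] ! k)" for j k
    using that(2,3) assms(6,7) irrefl
    by (cases rule: less_4_cases[OF that(1)]; cases rule: less_4_cases[OF that(2)]) simp_all
  then show ?thesis using is_cycle_4[OF assms(1-5)] unfolding is_hole_def by simp
qed

lemma nonadjacent_to_last:
  assumes "\<exists>x\<in>set xs. \<exists>y\<in>set xs. x \<noteq> y \<and> \<not> A x y"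
    and "\<forall>x\<in>set (butlast xs). \<forall>y\<in>set (butlast xs). x \<noteq> y \<longrightarrow> A x y"
    and sym: "\<And>x y. A x y \<Longrightarrow> A y x"
  obtains v where "v \<in> set (butlast xs)" "last xs \<noteq> v" "\<not> A (last xs) v"
proof -
  obtain x y where xy: "x \<in> set xs" "y \<in> set xs" "x \<noteq> y" "\<not> A x y" using assms(1) by blast
  then have "set xs = insert (last xs) (set (butlast xs))"
    by (metis append_butlast_last_id empty_iff empty_set insert_is_Un list.simps(15) set_append
        sup_commute)
  then have "x = last xs \<and> y \<in> set (butlast xs) \<or> y = last xs \<and> x \<in> set (butlast xs)"
    using xy assms(2) by auto
  then show ?thesis using that xy sym by blast
qed

section \<open>Covered cycles\<close>

definition edge_weight :: "('a \<Rightarrow> 'a \<Rightarrow> real) \<Rightarrow> 'a list \<Rightarrow> nat \<Rightarrow> real" where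
  "edge_weight w xs j = w (xs ! j) (xs ! (Suc j mod length xs))"

lemma covers_iff_edge_weight:
  assumes "b < length xs"
  shows "covers w xs a b \<longleftrightarrow>
    (\<forall>j\<in>{a..<b}. edge_weight w xs j \<le> w (xs ! a) (xs ! b)) \<or>
    (\<forall>j\<in>{..<length xs} - {a..<b}. edge_weight w xs j \<le> w (xs ! a) (xs ! b))"
proof -
  let ?c = "w (xs ! a) (xs ! b)"
  have "Suc j mod length xs = Suc j" if "j < b" for j using that assms by simp
  then have "(\<forall>j. a \<le> j \<and> j < b \<longrightarrow> w (xs ! j) (xs ! (j + 1)) \<le> ?c) \<longleftrightarrow>
      (\<forall>j\<in>{a..<b}. edge_weight w xs j \<le> ?c)"
    unfolding edge_weight_def by auto
  moreover have "(\<forall>j. (j < a \<or> b \<le> j) \<and> j < length xs \<longrightarrow>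
      w (xs ! j) (xs ! ((j + 1) mod length xs)) \<le> ?c)
      \<longleftrightarrow> (\<forall>j\<in>{..<length xs} - {a..<b}. edge_weight w xs j \<le> ?c)"
    unfolding edge_weight_def by auto
  ultimately show ?thesis unfolding covers_def by simp
qed

lemma edge_weight_rotate:
  assumes "j < length xs"
  shows "edge_weight w (rotate n xs) j = edge_weight w xs ((n + j) mod length xs)"
proof -
  have L: "0 < length xs" using assms by linarith
  have "(n + Suc j mod length xs) mod length xs = Suc ((n + j) mod length xs) mod length xs"
    by (simp add: mod_simps)
  then show ?thesis using assms L unfolding edge_weight_def by (simp add: nth_rotate)
qed

lemma edge_weight_rotate1:
  assumes "j < length xs"
  shows "edge_weight w (rotate1 xs) j = edge_weight w xs (Suc j mod length xs)"
  using edge_weight_rotate[OF assms, of w 1] by (simp add: rotate1_rotate_swap)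

lemma image_Suc_mod_lessThan: "(\<lambda>j. Suc j mod L) ` {..<L} = {..<L}"
proof -
  have "y \<in> (\<lambda>j. Suc j mod L) ` {..<L}" if "y < L" for y
  proof (cases y)
    case 0
    then show ?thesis using that by (intro image_eqI[of _ _ "L - 1"]) auto
  next
    case (Suc k)
    then show ?thesis using that by (intro image_eqI[of _ _ k]) auto
  qed
  then show ?thesis by fastforce
qed

lemma edge_weight_rotate_image:
  "edge_weight w (rotate n xs) ` {..<length xs} = edge_weight w xs ` {..<length xs}"
proof (induction n)
  case (Suc n)
  have "edge_weight w (rotate1 ys) ` {..<length ys} =
      edge_weight w ys ` (\<lambda>j. Suc j mod length ys) ` {..<length ys}" for ys
    by (simp add: image_image edge_weight_rotate1)
  from this[of "rotate n xs"] show ?case using Suc by (simp add: image_Suc_mod_lessThan)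
qed simp

lemma covers_rotate1_iff:
  assumes "a < b" "b < length xs"
  shows "covers w (rotate1 xs) a b \<longleftrightarrow>
    (\<forall>j\<in>{Suc a..<Suc b}. edge_weight w xs j \<le> w (rotate1 xs ! a) (rotate1 xs ! b)) \<or>
    (\<forall>j\<in>{..<length xs} - {Suc a..<Suc b}. edge_weight w xs j \<le> w (rotate1 xs ! a) (rotate1 xs ! b))"
proof -
  define L where "L = length xs"
  define f where "f j = Suc j mod L" for j
  define side where "side ys P \<longleftrightarrow> (\<forall>j\<in>P. edge_weight w ys j \<le> w (rotate1 xs ! a) (rotate1 xs ! b))"
    for ys P
  have side_rotate1: "side (rotate1 xs) P \<longleftrightarrow> side xs (f ` P)" if "P \<subseteq> {..<L}" for P
    using that unfolding side_def f_def L_def by (auto simp: subset_eq edge_weight_rotate1)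
  have "inj_on f {..<L}" unfolding inj_on_def f_def by (simp add: mod_if split: if_splits)
  then have f_diff: "f ` ({..<L} - P) = {..<L} - f ` P" if "P \<subseteq> {..<L}" for P
    using that image_Suc_mod_lessThan[of L] unfolding f_def by (simp add: inj_on_image_set_diff)
  have "f ` {a..<b} = Suc ` {a..<b}"
    using assms by (intro image_cong) (auto simp: f_def L_def)
  then have f_arc: "f ` {a..<b} = {Suc a..<Suc b}" by simp
  have arc: "{a..<b} \<subseteq> {..<L}" using assms unfolding L_def by auto
  have "covers w (rotate1 xs) a b \<longleftrightarrow>
      side (rotate1 xs) {a..<b} \<or> side (rotate1 xs) ({..<L} - {a..<b})"
    using covers_iff_edge_weight[of b "rotate1 xs" w a] assms unfolding side_def L_def by simp
  also have "\<dots> \<longleftrightarrow> side xs {Suc a..<Suc b} \<or> side xs ({..<L} - {Suc a..<Suc b})"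
    using side_rotate1[OF arc] side_rotate1[of "{..<L} - {a..<b}"] f_diff[OF arc] f_arc by auto
  finally show ?thesis unfolding side_def L_def .
qed

lemma well_covered_rotate1:
  assumes sym: "\<And>x y. A x y \<Longrightarrow> A y x" and w_sym: "\<And>x y. w x y = w y x"
    and wc: "well_covered A w xs"
  shows "well_covered A w (rotate1 xs)"
  unfolding well_covered_def
proof (intro allI impI)
  fix a b assume ch: "is_chord A (rotate1 xs) a b"
  define L where "L = length xs"
  have ab: "a < b" "b < L" "A (rotate1 xs ! a) (rotate1 xs ! b)" "b \<noteq> a + 1" "\<not> (a = 0 \<and> b = L - 1)"
    using ch unfolding is_chord_def L_def by auto
  have nth: "rotate1 xs ! j = xs ! (Suc j mod L)" if "j < L" for j
    using that unfolding L_def by (simp add: nth_rotate1)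
  note cov = covers_rotate1_iff[OF ab(1) ab(2)[unfolded L_def], of w]
  show "covers w (rotate1 xs) a b"
  proof (cases "Suc b < L")
    case True
    then have e: "rotate1 xs ! a = xs ! Suc a" "rotate1 xs ! b = xs ! Suc b"
      using nth ab by simp_all
    then have "is_chord A xs (Suc a) (Suc b)" using ab True unfolding is_chord_def L_def by auto
    then have "covers w xs (Suc a) (Suc b)" using wc unfolding well_covered_def by blast
    then show ?thesis using cov covers_iff_edge_weight[of "Suc b" xs w "Suc a"] True e
      unfolding L_def by simp
  next
    case False
    then have b: "Suc b = L" using ab by linarith
    then have e: "rotate1 xs ! a = xs ! Suc a" "rotate1 xs ! b = xs ! 0" using nth ab by simp_all
    then have "is_chord A xs 0 (Suc a)" using ab b sym unfolding is_chord_def L_def by auto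
    then have "covers w xs 0 (Suc a)" using wc unfolding well_covered_def by blast
    moreover have "{..<L} - {0..<Suc a} = {Suc a..<Suc b}" "{..<L} - {Suc a..<Suc b} = {0..<Suc a}"
      using ab b by auto
    ultimately show ?thesis
      using cov covers_iff_edge_weight[of "Suc a" xs w 0] ab e w_sym unfolding L_def by auto
  qed
qed

lemma well_covered_rotate:
  assumes "\<And>x y. A x y \<Longrightarrow> A y x" "\<And>x y. w x y = w y x" "well_covered A w xs"
  shows "well_covered A w (rotate n xs)"
  by (induction n) (simp_all add: assms(3) well_covered_rotate1[OF assms(1,2)])

lemma violated_cycle_rotate:
  assumes "\<And>x y. A x y \<Longrightarrow> A y x" "\<And>x y. w x y = w y x" "violated_cycle A w r xs"
  shows "violated_cycle A w r (rotate n xs)"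
  using assms is_cycle_rotate well_covered_rotate unfolding violated_cycle_def by (metis set_rotate)

lemma edge_weight_take:
  assumes "j < m" "m < length E"
  shows "edge_weight w (take (Suc m) E) j = edge_weight w E j"
  using assms unfolding edge_weight_def by simp

lemma edge_weight_take_last:
  assumes "m < length E"
  shows "edge_weight w (take (Suc m) E) m = w (E ! m) (E ! 0)"
  using assms unfolding edge_weight_def by simp

lemma well_covered_antimono:
  assumes "A' \<le> A" "well_covered A w xs"
  shows "well_covered A' w xs"
  using assms unfolding well_covered_def is_chord_def by blast

lemma chord_of_take_not_covering:
  assumes wc: "well_covered A w E" and sub: "A' \<le> A"
    and m: "m + 2 \<le> length E"
    and ch: "is_chord A' (take (Suc m) E) c d" and not_cov: "\<not> covers w (take (Suc m) E) c d"
  shows "is_chord A' E c d"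
    and "\<exists>j\<in>{c..<d}. w (E ! c) (E ! d) < edge_weight w E j"
    and "\<forall>j\<in>{..<length E} - {c..<d}. edge_weight w E j \<le> w (E ! c) (E ! d)"
    and "w (E ! c) (E ! d) < w (E ! m) (E ! 0)"
proof -
  let ?T = "take (Suc m) E" and ?c = "w (E ! c) (E ! d)"
  have cd: "c < d" "d \<le> m" "A' (E ! c) (E ! d)" "d \<noteq> c + 1"
    using ch m unfolding is_chord_def by auto
  show chE: "is_chord A' E c d" using cd m unfolding is_chord_def by auto
  have T: "?T ! c = E ! c" "?T ! d = E ! d" "length ?T = Suc m" using cd m by auto
  have edges: "edge_weight w ?T j = edge_weight w E j" if "j < m" for j
    using edge_weight_take[of j m E w] that m by simp
  have "covers w E c d" using wc chE sub unfolding well_covered_def is_chord_def by auto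
  then have cov: "(\<forall>j\<in>{c..<d}. edge_weight w E j \<le> ?c) \<or>
      (\<forall>j\<in>{..<length E} - {c..<d}. edge_weight w E j \<le> ?c)"
    using covers_iff_edge_weight[of d E w c] cd m by simp
  have not_cov_T: "\<not> (\<forall>j\<in>{c..<d}. edge_weight w ?T j \<le> ?c)"
    "\<not> (\<forall>j\<in>{..<Suc m} - {c..<d}. edge_weight w ?T j \<le> ?c)"
    using not_cov covers_iff_edge_weight[of d ?T w c] T cd by auto
  then show "\<exists>j\<in>{c..<d}. ?c < edge_weight w E j" using edges cd by force
  then show outer: "\<forall>j\<in>{..<length E} - {c..<d}. edge_weight w E j \<le> ?c"
    using cov by (meson not_le)
  have "edge_weight w ?T m = w (E ! m) (E ! 0)" using edge_weight_take_last[of m E w] m by simp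
  moreover have "\<forall>j\<in>{..<m} - {c..<d}. edge_weight w ?T j \<le> ?c" using outer edges m by auto
  ultimately show "?c < w (E ! m) (E ! 0)" using not_cov_T(2) cd by (force simp: less_Suc_eq)
qed

lemma well_covered_take:
  assumes wc: "well_covered A w E" and sub: "A' \<le> A"
    and w_sym: "\<And>x y. w x y = w y x" and m: "m + 2 \<le> length E"
    and heavy: "m \<le> j" "j < length E" "w (E ! 0) (E ! m) \<le> edge_weight w E j"
  shows "well_covered A' w (take (Suc m) E)"
  unfolding well_covered_def
proof (intro allI impI)
  fix c d assume ch: "is_chord A' (take (Suc m) E) c d"
  show "covers w (take (Suc m) E) c d"
  proof (rule ccontr)
    assume "\<not> covers w (take (Suc m) E) c d"
    note facts = chord_of_take_not_covering[OF wc sub m ch this]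
    have "d \<le> m" using ch m unfolding is_chord_def by auto
    then have "edge_weight w E j \<le> w (E ! c) (E ! d)" using facts(3) heavy by auto
    then show False using facts(4) heavy w_sym by (metis not_le order.trans)
  qed
qed

lemma well_covered_4:
  assumes "\<not> A a c"
    and "(w b c \<le> w b d \<and> w c d \<le> w b d) \<or> (w a b \<le> w b d \<and> w d a \<le> w b d)"
  shows "well_covered A w [a, b, c, d]"
proof -
  have "{1..<3} = {1, 2::nat}" "{..<length [a, b, c, d]} - {1..<3} = {0, 3::nat}" by auto
  then have "covers w [a, b, c, d] 1 3"
    using assms(2) covers_iff_edge_weight[of 3 "[a, b, c, d]" w 1]
    unfolding edge_weight_def by simp
  moreover have "i = 1 \<and> j = 3" if "is_chord A [a, b, c, d] i j" for i j
  proof -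
    have "i < j" "j < 4" "j \<noteq> i + 1" "\<not> (i = 0 \<and> j = 3)" "A ([a, b, c, d] ! i) ([a, b, c, d] ! j)"
      using that unfolding is_chord_def by auto
    then have "(i = 0 \<and> j = 2) \<or> (i = 1 \<and> j = 3)" "A ([a, b, c, d] ! i) ([a, b, c, d] ! j)"
      by linarith+
    then show ?thesis using assms(1) by auto
  qed
  ultimately show ?thesis unfolding well_covered_def by blast
qed

lemma violated_if_bad_hole:
  assumes "bad_hole A r xs"
  shows "violated_cycle A w r xs"
proof -
  have hole: "is_hole A xs" and bad: "\<exists>x\<in>set xs. x \<noteq> r \<and> \<not> A r x"
    using assms unfolding bad_hole_def by auto
  then have cyc: "is_cycle A xs" and L: "4 \<le> length xs"
    and induced: "\<And>j k. j < length xs \<Longrightarrow> k < length xs \<Longrightarrow> A (xs ! j) (xs ! k) \<Longrightarrow>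
        k = (j + 1) mod length xs \<or> j = (k + 1) mod length xs"
    unfolding is_hole_def by auto
  have "\<not> is_chord A xs a b" for a b
  proof
    assume "is_chord A xs a b"
    then have ab: "a < b" "b < length xs" "A (xs ! a) (xs ! b)" "b \<noteq> a + 1"
      "\<not> (a = 0 \<and> b = length xs - 1)"
      unfolding is_chord_def by auto
    then have a: "a = (b + 1) mod length xs" using induced[of a b] by simp
    show False
    proof (cases "b + 1 < length xs")
      case True
      then show False using a ab(1) by simp
    next
      case False
      then have "b + 1 = length xs" using ab(2) by simp
      then show False using a ab(5) by simp
    qed
  qed
  then have "well_covered A w xs" unfolding well_covered_def by blast
  moreover have L02: "0 < length xs" "2 < length xs" using L by linarith+
  moreover have "xs ! 0 \<noteq> xs ! 2"
    using cyc L02 unfolding is_cycle_def by (simp add: nth_eq_iff_index_eq)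
  moreover have "\<not> A (xs ! 0) (xs ! 2)" using induced[OF L02] L by auto
  moreover have "xs ! 0 \<in> set xs" "xs ! 2 \<in> set xs" using L02 by simp_all
  ultimately show ?thesis using cyc bad unfolding violated_cycle_def by blast
qed

lemma violated_if_bad_diamond:
  assumes "bad_diamond A w r a b c d"
  shows "violated_cycle A w r [a, b, c, d]"
proof -
  have "distinct [a, b, c, d]" "A a b" "A b c" "A c d" "A d a" and non_adj: "\<not> A a c"
    using assms unfolding bad_diamond_def induced_diamond_def by auto
  moreover from this(1-5) have "is_cycle A [a, b, c, d]" by (rule is_cycle_4)
  ultimately show ?thesis using assms unfolding bad_diamond_def violated_cycle_def by auto
qed

section \<open>The threshold graphs\<close>

locale weighted_complete_graph =
  fixes V :: "'a set" and w :: "'a \<Rightarrow> 'a \<Rightarrow> real"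
  assumes finite_V: "finite V" and w_sym: "\<And>x y. w x y = w y x"
begin

abbreviation G :: "nat \<Rightarrow> 'a \<Rightarrow> 'a \<Rightarrow> bool" where
  "G \<equiv> Gadj V w"

abbreviation K :: nat where
  "K \<equiv> card (weight_values V w)"

lemma finite_weight_values: "finite (weight_values V w)"
proof -
  have "weight_values V w \<subseteq> (\<lambda>(x, y). w x y) ` (V \<times> V)"
    unfolding weight_values_def by force
  then show ?thesis using finite_V by (meson finite_SigmaI finite_imageI finite_subset)
qed

lemma wval_strict_mono:
  assumes "1 \<le> i" "i < j" "j \<le> K"
  shows "wval V w i < wval V w j"
proof -
  have "sorted_wrt (<) (sorted_list_of_set (weight_values V w))"
    using finite_weight_values by (simp add: strict_sorted_iff)
  then show ?thesis
    unfolding wval_def using assms finite_weight_values by (simp add: sorted_wrt_nth_less)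
qed

lemma wval_mono:
  assumes "1 \<le> i" "i \<le> j" "j \<le> K"
  shows "wval V w i \<le> wval V w j"
  using wval_strict_mono[of i j] assms by (cases "i = j") auto

lemma G_sym: "G i x y \<Longrightarrow> G i y x"
  unfolding Gadj_def using w_sym by auto

lemma G_irrefl: "\<not> G i x x"
  unfolding Gadj_def by auto

lemma G_weight: "G i x y \<Longrightarrow> w x y \<le> wval V w i"
  unfolding Gadj_def by auto

lemma G_lower: "G i x y \<Longrightarrow> w x y \<le> wval V w m \<Longrightarrow> G m x y"
  unfolding Gadj_def by auto

lemma G_mono: "1 \<le> m \<Longrightarrow> m \<le> i \<Longrightarrow> i \<le> K \<Longrightarrow> G m x y \<Longrightarrow> G i x y"
  using G_weight G_lower wval_mono by (meson order.trans)

lemma G_le: "1 \<le> m \<Longrightarrow> m \<le> i \<Longrightarrow> i \<le> K \<Longrightarrow> G m \<le> G i"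
  using G_mono by blast

lemma level_of_edge:
  assumes "G i x y" "1 \<le> i" "i \<le> K"
  obtains m where "1 \<le> m" "m \<le> i" "wval V w m = w x y"
proof -
  have "w x y \<in> weight_values V w"
    using assms(1) unfolding Gadj_def weight_values_def by blast
  then obtain k where k: "k < K" "sorted_list_of_set (weight_values V w) ! k = w x y"
    using finite_weight_values
    by (metis in_set_conv_nth sorted_list_of_set.length_sorted_key_list_of_set
        sorted_list_of_set.set_sorted_key_list_of_set)
  then have "wval V w (Suc k) = w x y" unfolding wval_def by simp
  moreover have "Suc k \<le> i"
    using wval_strict_mono[of i "Suc k"] calculation G_weight[OF assms(1)] assms k by fastforce
  ultimately show ?thesis by (intro that[of "Suc k"]) simp_all
qed

lemma violated_cycle_lower_level:
  assumes viol: "violated_cycle (G i) w r xs" and m: "1 \<le> m" "m \<le> i" "i \<le> K"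
    and light: "\<And>j. j < length xs \<Longrightarrow> edge_weight w xs j \<le> wval V w m"
  shows "violated_cycle (G m) w r xs"
proof -
  have cyc: "is_cycle (G i) xs" and wc: "well_covered (G i) w xs"
    using viol unfolding violated_cycle_def by auto
  have "G m (xs ! j) (xs ! (Suc j mod length xs))" if "j < length xs" for j
    using is_cycle_edge[OF cyc that] light[OF that] G_lower unfolding edge_weight_def by blast
  then have "is_cycle (G m) xs" using cyc unfolding is_cycle_def by simp
  moreover have "well_covered (G m) w xs"
    using well_covered_antimono[OF G_le[OF m] wc] .
  ultimately show ?thesis using viol G_mono[OF m] unfolding violated_cycle_def by blast
qed

lemma violated_at_heaviest_level:
  assumes viol: "violated_cycle (G i) w r xs" and i: "1 \<le> i" "i \<le> K"
  obtains m where "1 \<le> m" "m \<le> i" "violated_cycle (G m) w r xs"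
    "wval V w m \<in> edge_weight w xs ` {..<length xs}"
proof -
  have cyc: "is_cycle (G i) xs" using viol unfolding violated_cycle_def by simp
  then have "3 \<le> length xs" unfolding is_cycle_def by simp
  then have "length xs \<noteq> 0" by linarith
  then have "Max (edge_weight w xs ` {..<length xs}) \<in> edge_weight w xs ` {..<length xs}"
    by (intro Max_in) auto
  then obtain j0 where j0: "j0 < length xs"
    "edge_weight w xs j0 = Max (edge_weight w xs ` {..<length xs})"
    by auto
  moreover obtain m where m: "1 \<le> m" "m \<le> i" "wval V w m = edge_weight w xs j0"
    using level_of_edge[OF is_cycle_edge[OF cyc j0(1)] i] unfolding edge_weight_def by blast
  moreover have "edge_weight w xs j \<le> wval V w m" if "j < length xs" for j
    using that m(3) j0(2) by simp
  ultimately show ?thesis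
    using that[OF m(1,2)] violated_cycle_lower_level[OF viol m(1,2) i(2)] j0(1) by blast
qed

lemma take_at_chord_level:
  assumes i: "1 \<le> i" "i \<le> K" and cyc: "is_cycle (G i) E" and wc: "well_covered (G i) w E"
    and n: "2 \<le> n" "n + 2 \<le> length E" and chord: "G i (E ! 0) (E ! n)"
    and light: "\<And>j. j < n \<Longrightarrow> edge_weight w E j \<le> w (E ! 0) (E ! n)"
    and heavy: "n \<le> j0" "j0 < length E" "w (E ! 0) (E ! n) \<le> edge_weight w E j0"
  obtains m where "1 \<le> m" "m \<le> i" "wval V w m = w (E ! 0) (E ! n)"
    "is_cycle (G m) (take (Suc n) E)" "well_covered (G m) w (take (Suc n) E)"
proof -
  obtain m where m: "1 \<le> m" "m \<le> i" "wval V w m = w (E ! 0) (E ! n)"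
    using level_of_edge[OF chord i] .
  have "is_cycle (G m) (take (Suc n) E)"
  proof (rule is_cycle_take)
    show "distinct E" using cyc unfolding is_cycle_def by simp
    show "G m (E ! j) (E ! Suc j)" if "j < n" for j
      using is_cycle_edge[OF cyc, of j] light[OF that] m(3) G_lower that n
      unfolding edge_weight_def by simp
    have "G m (E ! 0) (E ! n)" using chord m(3) G_lower by simp
    then show "G m (E ! n) (E ! 0)" by (rule G_sym)
  qed (use n in auto)
  moreover have "well_covered (G m) w (take (Suc n) E)"
    using well_covered_take[OF wc G_le[OF m(1,2) i(2)] w_sym n(2) heavy] .
  ultimately show ?thesis using that m by blast
qed

lemma outer_arc_at_chord_level:
  fixes xs :: "'a list"
  assumes i: "1 \<le> i" "i \<le> K" and cyc: "is_cycle (G i) xs" and wc: "well_covered (G i) w xs"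
    and chord: "is_chord (G i) xs c d"
    and heavy: "j0 \<in> {c..<d}" "w (xs ! c) (xs ! d) \<le> edge_weight w xs j0"
    and outer: "\<forall>j\<in>{..<length xs} - {c..<d}. edge_weight w xs j \<le> w (xs ! c) (xs ! d)"
  obtains m where "1 \<le> m" "m \<le> i" "wval V w m = w (xs ! c) (xs ! d)"
    "is_cycle (G m) (take (Suc (length xs - d + c)) (rotate d xs))"
    "well_covered (G m) w (take (Suc (length xs - d + c)) (rotate d xs))"
proof -
  define L where "L = length xs"
  define E where "E = rotate d xs"
  define k where "k = L - d + c"
  have cd: "c + 2 \<le> d" "d < L" "G i (xs ! c) (xs ! d)" "\<not> (c = 0 \<and> d = L - 1)"
    using chord unfolding is_chord_def L_def by auto
  then have k: "2 \<le> k" "k + 2 \<le> L" unfolding k_def by auto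
  have E_nth: "E ! j = xs ! ((d + j) mod L)" if "j < L" for j
    using that unfolding E_def L_def by (simp add: nth_rotate)
  have E_edge: "edge_weight w E j = edge_weight w xs ((d + j) mod L)" if "j < L" for j
    using edge_weight_rotate[of j xs w d] that unfolding E_def L_def by simp
  have "(d + k) mod L = c" using cd k unfolding k_def by (simp add: mod_if)
  then have E_chord: "E ! 0 = xs ! d" "E ! k = xs ! c" using E_nth cd k by simp_all
  obtain m where "1 \<le> m" "m \<le> i" "wval V w m = w (E ! 0) (E ! k)"
    "is_cycle (G m) (take (Suc k) E)" "well_covered (G m) w (take (Suc k) E)"
  proof (rule take_at_chord_level)
    show "is_cycle (G i) E" "well_covered (G i) w E"
      unfolding E_def using is_cycle_rotate[OF cyc] well_covered_rotate[OF _ w_sym wc] G_sym by auto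
    show "2 \<le> k" "k + 2 \<le> length E" using k unfolding E_def L_def by auto
    show "G i (E ! 0) (E ! k)" using E_chord cd G_sym by simp
    show "edge_weight w E j \<le> w (E ! 0) (E ! k)" if "j < k" for j
    proof -
      have "(d + j) mod L \<in> {..<L} - {c..<d}" using that cd unfolding k_def by (auto simp: mod_if)
      then show ?thesis using outer E_edge that k E_chord w_sym unfolding L_def by simp
    qed
    have "L - d + j0 < L" "(d + (L - d + j0)) mod L = j0" using heavy cd by (auto simp: mod_if)
    then show "w (E ! 0) (E ! k) \<le> edge_weight w E (L - d + j0)"
      using E_edge[of "L - d + j0"] heavy(2) E_chord w_sym by simp
    show "k \<le> L - d + j0" "L - d + j0 < length E" using heavy cd unfolding k_def E_def L_def by auto
  qed (use i in auto)
  then show ?thesis using that E_chord w_sym unfolding E_def k_def L_def by simp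
qed

end

section \<open>A shortest violated cycle\<close>

locale no_bad_subgraphs = weighted_complete_graph +
  fixes r :: 'a
  assumes no_bad_hole: "1 \<le> i \<Longrightarrow> i < K \<Longrightarrow> \<not> bad_hole (G i) r xs"
    and no_bad_diamond: "1 \<le> i \<Longrightarrow> i < K \<Longrightarrow> \<not> bad_diamond (G i) w r a b c d"
begin

lemma no_covered_diamond_near_bad_vertex:
  assumes i: "1 \<le> i" "i < K"
    and edges: "G i z p" "G i q z" "G i p q" "G i p v" "G i v q"
    and non_adj: "\<not> G i z v" "z \<noteq> v"
    and cover: "(w p v \<le> w p q \<and> w v q \<le> w p q) \<or> (w z p \<le> w p q \<and> w q z \<le> w p q)"
    and bad: "b \<in> {z, p, q}" "b \<noteq> r" "\<not> G i r b"
  shows False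
proof -
  have "distinct [z, p, v, q]" using edges non_adj(2) G_irrefl by auto
  then have "induced_diamond (G i) z p v q"
    using edges non_adj(1) unfolding induced_diamond_def by auto
  moreover have "well_covered (G i) w [z, p, v, q]"
    using well_covered_4[where A = "G i", OF non_adj(1) cover] .
  ultimately have good: "(z = r \<or> G i r z) \<and> (v = r \<or> G i r v)"
    using no_bad_diamond[OF i, of z p v q] unfolding bad_diamond_def by blast
  then have "b \<in> {p, q}" using bad by auto
  then have bz: "G i b z" and vb: "G i v b" using edges G_sym by auto
  then have "z \<noteq> r" "v \<noteq> r" using bad(3) G_sym by auto
  with good have zr: "G i z r" and rv: "G i r v" using G_sym by auto
  have "distinct [b, z, r, v]" using bz vb zr bad(2) non_adj G_irrefl by auto
  then have "is_hole (G i) [b, z, r, v]"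
    using bz zr rv vb bad(3) non_adj(1) G_sym G_irrefl by (intro is_hole_4) auto
  then have "bad_hole (G i) r [b, z, r, v]" using bad unfolding bad_hole_def by auto
  then show False using no_bad_hole[OF i] by blast
qed

lemma bad_vertex_without_chord:
  fixes xs :: "'a list"
  defines "x \<equiv> xs ! (length xs - 1)"
  assumes i: "1 \<le> i" "i < K" and cyc: "is_cycle (G i) xs" and len: "4 \<le> length xs"
    and bad: "x \<noteq> r" "\<not> G i r x"
    and no_chord: "\<And>c. 1 \<le> c \<Longrightarrow> c + 3 \<le> length xs \<Longrightarrow> \<not> G i (xs ! c) x"
    and no_triangle: "\<not> G i (xs ! 0) (xs ! (length xs - 2))"
  shows False
proof -
  define L where "L = length xs"
  have neighbours: "y = xs ! 0 \<or> y = xs ! (L - 2)" if y: "y \<in> set xs" "G i x y" for y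
  proof -
    obtain j where j: "j < L" "xs ! j = y" using y(1) unfolding L_def in_set_conv_nth by blast
    have "j \<noteq> L - 1" using y(2) j G_irrefl unfolding x_def L_def by auto
    moreover have "\<not> (1 \<le> j \<and> j + 3 \<le> L)" using no_chord G_sym[OF y(2)] j unfolding L_def by blast
    ultimately have "j = 0 \<or> j = L - 2" using j(1) by (cases "j = 0") auto
    then show ?thesis using j by auto
  qed
  have "\<not> G i y z" if "y \<in> set xs" "z \<in> set xs" "G i x y" "G i x z" for y z
  proof
    assume "G i y z"
    then have "y \<noteq> z" using G_irrefl by auto
    then have "G i (xs ! 0) (xs ! (L - 2)) \<or> G i (xs ! (L - 2)) (xs ! 0)"
      using neighbours[OF that(1,3)] neighbours[OF that(2,4)] \<open>G i y z\<close> by auto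
    then show False using no_triangle G_sym[of i "xs ! (L - 2)" "xs ! 0"] unfolding L_def by blast
  qed
  moreover have "x \<in> set xs" using len unfolding x_def by simp
  ultimately obtain H where "is_hole (G i) H" "x \<in> set H"
    using hole_through_vertex[OF G_sym G_irrefl cyc] by blast
  then have "bad_hole (G i) r H" using bad unfolding bad_hole_def by blast
  then show False using no_bad_hole[OF i] by blast
qed

end

locale no_shorter_violated_cycle = no_bad_subgraphs +
  fixes n :: nat
  assumes no_shorter_violated: "1 \<le> j \<Longrightarrow> j < K \<Longrightarrow> length ys < n \<Longrightarrow> \<not> violated_cycle (G j) w r ys"
begin

lemma shorter_cycle_through_bad_vertex_complete:
  assumes i: "1 \<le> i" "i < K" and D: "is_cycle (G i) D" "well_covered (G i) w D" "length D < n"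
    and x: "x \<in> set D" "x \<noteq> r" "\<not> G i r x"
    and yz: "y \<in> set D" "z \<in> set D" "y \<noteq> z"
  shows "G i y z"
  using no_shorter_violated[OF i(1,2) D(3)] D(1,2) x yz unfolding violated_cycle_def by blast

lemma bad_triangle_at_end_shortcut:
  fixes xs :: "'a list"
  defines "p \<equiv> xs ! 0" and "q \<equiv> xs ! (length xs - 2)" and "z \<equiv> xs ! (length xs - 1)"
  assumes i: "1 \<le> i" "i < K" and viol: "violated_cycle (G i) w r xs"
    and len: "4 \<le> length xs" "length xs \<le> n" and m: "1 \<le> m" "m \<le> i"
    and C: "is_cycle (G m) (butlast xs)" "well_covered (G m) w (butlast xs)"
    and cover: "\<And>y. G m p y \<Longrightarrow> G m y q \<Longrightarrow>
      (w p y \<le> w p q \<and> w y q \<le> w p q) \<or> (w z p \<le> w p q \<and> w q z \<le> w p q)"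
    and pq: "G i p q" and bad: "b \<in> {z, p, q}" "b \<noteq> r" "\<not> G i r b"
  shows False
proof -
  let ?C = "butlast xs"
  have cyc: "is_cycle (G i) xs" and nonadj: "\<exists>x\<in>set xs. \<exists>y\<in>set xs. x \<noteq> y \<and> \<not> G i x y"
    using viol unfolding violated_cycle_def by auto
  have mono: "G m x y \<Longrightarrow> G i x y" for x y using G_mono[OF m] i by simp
  have zp: "G i z p" using is_cycle_edge_last[OF cyc] unfolding z_def p_def .
  have "Suc (length xs - 2) = length xs - 1" "length xs - 1 < length xs" using len by linarith+
  then have qz: "G i q z"
    using is_cycle_edge_Suc[OF cyc, of "length xs - 2"] unfolding z_def q_def by simp
  have "0 < length ?C" "length xs - 2 < length ?C" using len by simp_all
  then have pqC: "p \<in> set ?C" "q \<in> set ?C"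
    unfolding p_def q_def by (metis nth_butlast nth_mem)+
  have "\<not> violated_cycle (G m) w r ?C" using no_shorter_violated[of m] m i len by simp
  then consider (clique) "\<forall>x\<in>set ?C. \<forall>y\<in>set ?C. x \<noteq> y \<longrightarrow> G m x y"
    | (dominated) "\<forall>x\<in>set ?C. x = r \<or> G m r x"
    using C unfolding violated_cycle_def by blast
  then show False
  proof cases
    case clique
    have "xs \<noteq> []" using len(1) by (metis list.size(3) not_numeral_le_zero)
    then have "z = last xs" unfolding z_def by (simp add: last_conv_nth)
    then obtain v where v: "v \<in> set ?C" "z \<noteq> v" "\<not> G i z v"
      using nonadjacent_to_last[OF nonadj _ G_sym] clique mono by metis
    then have "v \<noteq> p" "v \<noteq> q" using zp qz G_sym by auto
    then have "G m p v" "G m v q" using clique v(1) pqC by auto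
    then show False
      using no_covered_diamond_near_bad_vertex[OF i zp qz pq _ _ v(3,2) cover bad] mono by blast
  next
    case dominated
    have "b \<notin> set ?C" using dominated bad mono by blast
    then have "b = z" using bad(1) pqC by auto
    then have zr: "\<not> G i z r" "z \<noteq> r" using bad G_sym by auto
    then have "p \<noteq> r" "q \<noteq> r" using zp qz G_sym by auto
    then have "G m p r" "G m r q" using dominated pqC G_sym by auto
    \<comment> \<open>\<open>r\<close> itself completes the diamond\<close>
    then show False
      using no_covered_diamond_near_bad_vertex[OF i zp qz pq _ _ zr cover bad] mono by blast
  qed
qed

lemma bad_triangle_at_end_light_chord:
  fixes xs :: "'a list"
  defines "p \<equiv> xs ! 0" and "q \<equiv> xs ! (length xs - 2)" and "z \<equiv> xs ! (length xs - 1)"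
  assumes i: "1 \<le> i" "i < K" and viol: "violated_cycle (G i) w r xs" and len: "length xs \<le> n"
    and chord: "is_chord (G i) xs c d" "d \<le> length xs - 2"
    and heavy: "j0 \<in> {c..<d}" "w (xs ! c) (xs ! d) < edge_weight w xs j0"
    and outer: "\<forall>j\<in>{..<length xs} - {c..<d}. edge_weight w xs j \<le> w (xs ! c) (xs ! d)"
    and lighter: "w (xs ! c) (xs ! d) < w p q"
    and bad: "b \<in> {z, p, q}" "b \<noteq> r" "\<not> G i r b"
  shows False
proof -
  define L where "L = length xs"
  define D where "D = take (Suc (L - d + c)) (rotate d xs)"
  have cyc: "is_cycle (G i) xs" and wc: "well_covered (G i) w xs"
    using viol unfolding violated_cycle_def by auto
  obtain m where m: "1 \<le> m" "m \<le> i" "wval V w m = w (xs ! c) (xs ! d)"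
    and D: "is_cycle (G m) D" "well_covered (G m) w D"
    using outer_arc_at_chord_level[OF i(1) less_imp_le[OF i(2)] cyc wc chord(1) heavy(1)
        less_imp_le[OF heavy(2)] outer]
    unfolding D_def L_def by blast
  have cd: "c + 2 \<le> d" "d < L" using chord unfolding is_chord_def L_def by auto
  have member: "xs ! ((d + j) mod L) \<in> set D" if "j \<le> L - d + c" for j
    using nth_mem_take_rotate[OF that, of xs d] cd unfolding D_def L_def by simp
  have "d + (L - d) = L + 0" "d + (L - 1 - d) = L - 1" "d + (L - 2 - d) = L - 2"
    "L - 1 < L" "L - 2 < L"
    using cd chord(2) unfolding L_def by linarith+
  then have "p \<in> set D" "z \<in> set D" "q \<in> set D"
    using member[of "L - d"] member[of "L - 1 - d"] member[of "L - 2 - d"] cd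
    unfolding p_def q_def z_def L_def by simp_all
  moreover have "0 < length xs" "length xs - 2 < length xs" "length xs - 2 \<noteq> 0"
    using chord(2) cd unfolding L_def by linarith+
  then have "p \<noteq> q" using cyc unfolding p_def q_def is_cycle_def by (simp add: nth_eq_iff_index_eq)
  moreover have "\<not> G m p q" using G_weight m(3) lighter by fastforce
  moreover have "\<not> G m r b" using bad(3) G_mono[OF m(1,2)] i by auto
  ultimately have "violated_cycle (G m) w r D"
    using D bad unfolding violated_cycle_def by blast
  moreover have "length D < n" using cd len unfolding D_def L_def by simp
  ultimately show False using no_shorter_violated m i by simp
qed

lemma bad_triangle_at_end_chord_heaviest:
  fixes xs :: "'a list"
  defines "p \<equiv> xs ! 0" and "q \<equiv> xs ! (length xs - 2)" and "z \<equiv> xs ! (length xs - 1)"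
  assumes i: "1 \<le> i" "i < K" and viol: "violated_cycle (G i) w r xs"
    and len: "4 \<le> length xs" "length xs \<le> n"
    and pq: "G i p q" and heaviest: "w q z \<le> w p q" "w z p \<le> w p q"
    and bad: "b \<in> {z, p, q}" "b \<noteq> r" "\<not> G i r b"
  shows False
proof -
  define L where "L = length xs"
  have cyc: "is_cycle (G i) xs" and wc: "well_covered (G i) w xs"
    using viol unfolding violated_cycle_def by auto
  have L: "Suc (L - 2) = L - 1" "L - 2 + 2 = L" "L - 2 < L" "2 \<le> L - 2"
    using len unfolding L_def by linarith+
  have C: "butlast xs = take (Suc (L - 2)) xs"
    using L unfolding L_def by (simp add: butlast_conv_take)
  show False
  proof (cases "well_covered (G i) w (butlast xs)")
    case True
    have "is_cycle (G i) (butlast xs)"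
      unfolding C using pq G_sym L
      by (intro is_cycle_take_closed[OF cyc]) (auto simp: p_def q_def L_def)
    then show False
      using bad_triangle_at_end_shortcut[OF i viol len i(1) order.refl _ True,
          folded p_def q_def z_def] pq bad heaviest
      by blast
  next
    case False
    then obtain c d where ch: "is_chord (G i) (take (Suc (L - 2)) xs) c d"
      and not_cov: "\<not> covers w (take (Suc (L - 2)) xs) c d"
      unfolding C well_covered_def by blast
    have "L - 2 + 2 \<le> length xs" using L unfolding L_def by simp
    note light = chord_of_take_not_covering[OF wc order.refl this ch not_cov]
    have "d \<le> L - 2" using ch L unfolding is_chord_def by auto
    moreover obtain j0 where "j0 \<in> {c..<d}" "w (xs ! c) (xs ! d) < edge_weight w xs j0"
      using light(2) by blast
    moreover have "w (xs ! c) (xs ! d) < w p q"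
      using light(4) w_sym unfolding p_def q_def L_def by simp
    ultimately show False
      using bad_triangle_at_end_light_chord[OF i viol len(2) light(1), folded p_def q_def z_def]
        light(3) bad L
      unfolding L_def by blast
  qed
qed

lemma bad_triangle_at_end_chord_not_heaviest:
  fixes xs :: "'a list"
  defines "p \<equiv> xs ! 0" and "q \<equiv> xs ! (length xs - 2)" and "z \<equiv> xs ! (length xs - 1)"
  assumes i: "1 \<le> i" "i < K" and viol: "violated_cycle (G i) w r xs"
    and len: "4 \<le> length xs" "length xs \<le> n"
    and pq: "G i p q" and heavier: "w p q < w q z \<or> w p q < w z p"
    and bad: "b \<in> {z, p, q}" "b \<noteq> r" "\<not> G i r b"
  shows False
proof -
  define L where "L = length xs"
  have cyc: "is_cycle (G i) xs" and wc: "well_covered (G i) w xs"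
    using viol unfolding violated_cycle_def by auto
  have L: "Suc (L - 2) = L - 1" "Suc (L - 1) = L" "L - 2 < L" "L - 1 < L" "2 \<le> L - 2"
    using len unfolding L_def by linarith+
  have triangle_edges: "edge_weight w xs (L - 2) = w q z" "edge_weight w xs (L - 1) = w z p"
    using L unfolding edge_weight_def p_def q_def z_def L_def by simp_all
  obtain j0 where j0: "L - 2 \<le> j0" "j0 < L" "w p q < edge_weight w xs j0"
  proof (cases "w p q < w q z")
    case True
    then show ?thesis using that[of "L - 2"] triangle_edges L by simp
  next
    case False
    then show ?thesis using that[of "L - 1"] heavier triangle_edges L by simp
  qed
  have "is_chord (G i) xs 0 (L - 2)" using pq L unfolding is_chord_def p_def q_def L_def by auto
  then have "covers w xs 0 (L - 2)" using wc unfolding well_covered_def by blast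
  then have "edge_weight w xs j \<le> w p q" if "j < L - 2" for j
    using covers_iff_edge_weight[of "L - 2" xs w 0] j0 that L unfolding p_def q_def L_def
    by (auto simp: not_le[symmetric])
  then obtain m where m: "1 \<le> m" "m \<le> i" "wval V w m = w p q"
    and C_m: "is_cycle (G m) (butlast xs)" "well_covered (G m) w (butlast xs)"
    using take_at_chord_level[OF i(1) _ cyc wc, of "L - 2" j0] i L pq j0
    unfolding p_def q_def L_def by (auto simp: butlast_conv_take less_imp_le)
  have "w p y \<le> w p q \<and> w y q \<le> w p q" if "G m p y" "G m y q" for y
    using G_weight[OF that(1)] G_weight[OF that(2)] m(3) by simp
  then show False
    using bad_triangle_at_end_shortcut[OF i viol len m(1,2) C_m, folded p_def q_def z_def] pq bad
    by blast
qed

lemma bad_triangle_at_end: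
  fixes xs :: "'a list"
  defines "p \<equiv> xs ! 0" and "q \<equiv> xs ! (length xs - 2)" and "z \<equiv> xs ! (length xs - 1)"
  assumes i: "1 \<le> i" "i < K" and viol: "violated_cycle (G i) w r xs"
    and len: "4 \<le> length xs" "length xs \<le> n"
    and pq: "G i p q" and bad: "b \<in> {z, p, q}" "b \<noteq> r" "\<not> G i r b"
  shows False
proof (cases "w q z \<le> w p q \<and> w z p \<le> w p q")
  case True
  then show False
    using bad_triangle_at_end_chord_heaviest[OF i viol len, folded p_def q_def z_def] pq bad
    by blast
next
  case False
  then show False
    using bad_triangle_at_end_chord_not_heaviest[OF i viol len, folded p_def q_def z_def] pq bad
    by (meson not_le)
qed

lemma bad_triangle:
  assumes i: "1 \<le> i" "i < K" and viol: "violated_cycle (G i) w r xs"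
    and len: "4 \<le> length xs" "length xs \<le> n" and t: "t < length xs"
    and chord: "G i (xs ! t) (xs ! ((t + 2) mod length xs))"
    and bad: "b \<in> {xs ! t, xs ! ((t + 1) mod length xs), xs ! ((t + 2) mod length xs)}"
      "b \<noteq> r" "\<not> G i r b"
  shows False
proof -
  define L where "L = length xs"
  define ys where "ys = rotate (t + 2) xs"
  have L: "0 < L" "L - 2 < L" "L - 1 < L" using len unfolding L_def by linarith+
  have ys_nth: "ys ! j = xs ! ((t + 2 + j) mod L)" if "j < L" for j
    using that unfolding ys_def L_def by (rule nth_rotate)
  have "t + 2 + (L - 2) = t + L" "t + 2 + (L - 1) = (t + 1) + L"
    using len unfolding L_def by linarith+
  then have "(t + 2 + (L - 2)) mod L = t" "(t + 2 + (L - 1)) mod L = (t + 1) mod L"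
    using t unfolding L_def by (simp_all only: mod_add_self2) simp
  then have "ys ! (L - 2) = xs ! t" "ys ! (L - 1) = xs ! ((t + 1) mod L)"
    "ys ! 0 = xs ! ((t + 2) mod L)"
    using ys_nth[of "L - 2"] ys_nth[of "L - 1"] ys_nth[of 0] L by simp_all
  moreover have "length ys = L" unfolding ys_def L_def by simp
  moreover have "violated_cycle (G i) w r ys"
    unfolding ys_def using violated_cycle_rotate[OF _ w_sym viol] G_sym by blast
  ultimately show False
    using bad_triangle_at_end[OF i, of ys] len chord bad G_sym unfolding L_def by auto
qed

lemma bad_vertex_adjacent_to_second:
  fixes xs :: "'a list"
  defines "x \<equiv> xs ! (length xs - 1)"
  assumes i: "1 \<le> i" "i < K" and cyc: "is_cycle (G i) xs" and wc: "well_covered (G i) w xs"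
    and len: "4 \<le> length xs" "length xs \<le> n" and bad: "x \<noteq> r" "\<not> G i r x"
    and chord: "1 \<le> c" "c + 3 \<le> length xs" "G i (xs ! c) x"
    and heavy: "c \<le> j0" "j0 < length xs - 1" "w (xs ! c) x \<le> edge_weight w xs j0"
  shows "G i x (xs ! 1)"
proof -
  define L where "L = length xs"
  define E where "E = rotate (L - 1) xs"
  define D where "D = take (Suc (Suc c)) E"
  have ch: "is_chord (G i) xs c (L - 1)" using chord unfolding is_chord_def x_def L_def by auto
  have "L - (L - 1) + c = Suc c" using len unfolding L_def by simp
  then have cycD: "is_cycle (G i) D"
    using is_cycle_chord_arcs(2)[OF cyc ch G_sym] unfolding D_def E_def L_def by simp
  have "xs \<noteq> []" using len(1) by (metis list.size(3) not_numeral_le_zero)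
  have idx: "L - 1 + Suc c = L + c" "L - 1 + Suc j0 = L + j0" "L - 1 + 2 = L + 1"
    "L - 1 < L" "Suc c < L" "Suc j0 < L" "1 < L"
    using len chord(2) heavy(2) unfolding L_def by linarith+
  then have E: "E ! 0 = x" "E ! Suc c = xs ! c" "edge_weight w E (Suc j0) = edge_weight w xs j0"
    using nth_rotate[of 0 xs "L - 1"] nth_rotate[of "Suc c" xs "L - 1"]
      edge_weight_rotate[of "Suc j0" xs w "L - 1"]
    using \<open>xs \<noteq> []\<close> unfolding E_def x_def L_def by (simp_all add: add_mod_self_left_less)
  have wcD: "well_covered (G i) w D"
    using heavy chord(2) E w_sym well_covered_rotate[OF _ w_sym wc] G_sym
    unfolding D_def E_def L_def by (intro well_covered_take[where j = "Suc j0"]) auto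
  have D_mem: "xs ! ((L - 1 + j) mod L) \<in> set D" if "j \<le> Suc c" for j
    using nth_mem_take_rotate[OF that, of xs "L - 1"] idx(5) unfolding D_def E_def L_def by simp
  have "(L - 1 + 0) mod L = L - 1" "(L - 1 + 2) mod L = 1"
    using idx add_mod_self_left_less[of 1 L] by simp_all
  then have "x \<in> set D" "xs ! 1 \<in> set D"
    using D_mem[of 0] D_mem[of 2] chord(1) unfolding x_def L_def by simp_all
  moreover have "x \<noteq> xs ! 1"
    using cyc len unfolding x_def is_cycle_def by (simp add: nth_eq_iff_index_eq)
  moreover have "length D < n" using chord(2) len unfolding D_def by simp
  ultimately show "G i x (xs ! 1)"
    using shorter_cycle_through_bad_vertex_complete[OF i cycD wcD _ _ bad] by blast
qed

lemma bad_vertex_adjacent_to_third_last: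
  fixes xs :: "'a list"
  defines "x \<equiv> xs ! (length xs - 1)"
  assumes i: "1 \<le> i" "i < K" and cyc: "is_cycle (G i) xs" and wc: "well_covered (G i) w xs"
    and len: "4 \<le> length xs" "length xs \<le> n" and bad: "x \<noteq> r" "\<not> G i r x"
    and chord: "1 \<le> c" "c + 3 \<le> length xs" "G i (xs ! c) x"
    and heavy: "j0 < c \<or> j0 = length xs - 1" "j0 < length xs" "w (xs ! c) x \<le> edge_weight w xs j0"
  shows "G i x (xs ! (length xs - 3))"
proof -
  define L where "L = length xs"
  define E where "E = rotate c xs"
  define D where "D = take (Suc (L - 1 - c)) E"
  have ch: "is_chord (G i) xs c (L - 1)" using chord unfolding is_chord_def x_def L_def by auto
  then have cycD: "is_cycle (G i) D"
    using is_cycle_chord_arcs(1)[OF cyc ch G_sym] unfolding D_def E_def L_def by simp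
  have "xs \<noteq> []" using len(1) by (metis list.size(3) not_numeral_le_zero)
  obtain j where j: "L - 1 - c \<le> j" "j < L" "(c + j) mod L = j0"
  proof (cases "j0 < c")
    case True
    then have "c + (L - c + j0) = L + j0" "L - c + j0 < L"
      using chord(2) unfolding L_def by linarith+
    then show ?thesis using that[of "L - c + j0"] add_mod_self_left_less[of j0 L] heavy(2)
      unfolding L_def by simp
  next
    case False
    then have "j0 = L - 1" "c + (L - 1 - c) = L - 1" "L - 1 < L"
      using heavy(1) chord(2) unfolding L_def by linarith+
    then show ?thesis using that[of "L - 1 - c"] by simp
  qed
  have idx: "c + (L - 1 - c) = L - 1" "c + (L - 3 - c) = L - 3" "L - 1 < L" "c < L"
    using chord unfolding L_def by linarith+
  then have E: "E ! 0 = xs ! c" "E ! (L - 1 - c) = x" "edge_weight w E j = edge_weight w xs j0"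
    using nth_rotate[of 0 xs c] nth_rotate[of "L - 1 - c" xs c] edge_weight_rotate[of j xs w c] j
      \<open>xs \<noteq> []\<close> unfolding E_def x_def L_def by simp_all
  have wcD: "well_covered (G i) w D"
    using heavy j chord(1,2) E w_sym well_covered_rotate[OF _ w_sym wc] G_sym
    unfolding D_def E_def L_def by (intro well_covered_take[where j = j]) auto
  have D_mem: "xs ! ((c + k) mod L) \<in> set D" if "k \<le> L - 1 - c" for k
    using nth_mem_take_rotate[OF that, of xs c] idx unfolding D_def E_def L_def by simp
  then have "x \<in> set D" "xs ! (L - 3) \<in> set D"
    using D_mem[of "L - 1 - c"] D_mem[of "L - 3 - c"] idx unfolding x_def L_def by simp_all
  moreover have "x \<noteq> xs ! (L - 3)"
    using cyc len unfolding x_def is_cycle_def L_def by (simp add: nth_eq_iff_index_eq)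
  moreover have "length D < n" using chord(1) len unfolding D_def E_def L_def by simp
  ultimately show "G i x (xs ! (length xs - 3))"
    using shorter_cycle_through_bad_vertex_complete[OF i cycD wcD _ _ bad] unfolding L_def by blast
qed

lemma chord_at_bad_vertex:
  fixes xs :: "'a list"
  defines "x \<equiv> xs ! (length xs - 1)"
  assumes i: "1 \<le> i" "i < K" and viol: "violated_cycle (G i) w r xs"
    and len: "4 \<le> length xs" "length xs \<le> n"
    and heaviest: "wval V w i \<in> edge_weight w xs ` {..<length xs}"
    and bad: "x \<noteq> r" "\<not> G i r x"
    and chord: "1 \<le> c" "c + 3 \<le> length xs" "G i (xs ! c) x"
  shows False
proof -
  define L where "L = length xs"
  have cyc: "is_cycle (G i) xs" and wc: "well_covered (G i) w xs"
    using viol unfolding violated_cycle_def by auto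
  obtain j0 where j0: "j0 < L" "wval V w i = edge_weight w xs j0"
    using heaviest unfolding L_def by blast
  then have heavy: "w (xs ! c) x \<le> edge_weight w xs j0" using G_weight[OF chord(3)] by simp
  have "L - 1 + 1 = L" "L - 1 + 2 = L + 1" "L - 3 + 1 = L - 2" "L - 3 + 2 = L - 1"
    "1 < L" "L - 2 < L" and t: "L - 1 < L" "L - 3 < L"
    using len unfolding L_def by linarith+
  then have L: "(L - 1 + 1) mod L = 0" "(L - 1 + 2) mod L = 1" "(L - 3 + 1) mod L = L - 2"
    "(L - 3 + 2) mod L = L - 1"
    using add_mod_self_left_less[of 1 L] by simp_all
  show False
  proof (cases "c \<le> j0 \<and> j0 < L - 1")
    case True
    then have "G i x (xs ! 1)"
      using bad_vertex_adjacent_to_second[OF i cyc wc len, folded x_def] bad chord heavy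
      unfolding L_def by blast
    then show False
      using bad_triangle[OF i viol len t(1)[unfolded L_def], of x] bad L
      unfolding x_def L_def by simp
  next
    case False
    then have "j0 < c \<or> j0 = L - 1" using j0(1) by linarith
    then have "G i x (xs ! (L - 3))"
      using bad_vertex_adjacent_to_third_last[OF i cyc wc len, folded x_def] bad chord heavy j0(1)
      unfolding L_def by blast
    then show False
      using bad_triangle[OF i viol len t(2)[unfolded L_def], of x] bad L G_sym
      unfolding x_def L_def by simp
  qed
qed

lemma bad_vertex_last:
  fixes xs :: "'a list"
  defines "x \<equiv> xs ! (length xs - 1)"
  assumes i: "1 \<le> i" "i < K" and viol: "violated_cycle (G i) w r xs" and len: "length xs \<le> n"
    and heaviest: "wval V w i \<in> edge_weight w xs ` {..<length xs}"
    and bad: "x \<noteq> r" "\<not> G i r x"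
  shows False
proof -
  define L where "L = length xs"
  have cyc: "is_cycle (G i) xs" and nonadj: "\<exists>y\<in>set xs. \<exists>z\<in>set xs. y \<noteq> z \<and> \<not> G i y z"
    using viol unfolding violated_cycle_def by auto
  have "length xs \<noteq> 3" using nonadj is_cycle_length_3[OF cyc _ G_sym] by blast
  then have len4: "4 \<le> length xs" using cyc unfolding is_cycle_def by simp
  then have "L - 2 < L" "L - 2 + 1 = L - 1" "L - 2 + 2 = L" "L - 1 < L" unfolding L_def by linarith+
  then have "(L - 2 + 1) mod L = L - 1" "(L - 2 + 2) mod L = 0" by simp_all
  consider (triangle) "G i (xs ! 0) (xs ! (L - 2))"
    | (chord) c where "1 \<le> c" "c + 3 \<le> L" "G i (xs ! c) x"
    | (neither) "\<not> G i (xs ! 0) (xs ! (L - 2))" "\<And>c. 1 \<le> c \<Longrightarrow> c + 3 \<le> L \<Longrightarrow> \<not> G i (xs ! c) x"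
    by blast
  then show False
  proof cases
    case triangle
    then show False
      using bad_triangle[OF i viol len4 len \<open>L - 2 < L\<close>[unfolded L_def], of x] bad G_sym
        \<open>(L - 2 + 1) mod L = L - 1\<close> \<open>(L - 2 + 2) mod L = 0\<close> unfolding x_def L_def by simp
  next
    case chord
    then show False using chord_at_bad_vertex[OF i viol len4 len heaviest] bad
      unfolding x_def L_def by blast
  next
    case neither
    then show False using bad_vertex_without_chord[OF i cyc len4] bad unfolding x_def L_def by blast
  qed
qed

end

context no_bad_subgraphs
begin

theorem no_violated_cycle:
  assumes "1 \<le> i" "i < K"
  shows "\<not> violated_cycle (G i) w r xs"
  using assms
proof (induction "length xs" arbitrary: i xs rule: less_induct)
  case less
  interpret no_shorter_violated_cycle V w r "length xs"
    by unfold_locales (use less.hyps in blast)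
  show ?case
  proof
    assume viol: "violated_cycle (G i) w r xs"
    have "i \<le> K" using less.prems by simp
    obtain m where m: "1 \<le> m" "m \<le> i" "violated_cycle (G m) w r xs"
      "wval V w m \<in> edge_weight w xs ` {..<length xs}"
      by (rule violated_at_heaviest_level[OF viol less.prems(1) \<open>i \<le> K\<close>])
    obtain x where "x \<in> set xs" "x \<noteq> r" "\<not> G m r x"
      using m(3) unfolding violated_cycle_def by blast
    then obtain t where t: "t < length xs" "xs ! t \<noteq> r" "\<not> G m r (xs ! t)"
      by (metis in_set_conv_nth)
    define ys where "ys = rotate (Suc t) xs"
    have "Suc t + (length xs - 1) = length xs + t" "length xs - 1 < length xs"
      using t(1) by linarith+
    then have "ys ! (length ys - 1) = xs ! t"
      using t(1) nth_rotate[of "length xs - 1" xs "Suc t"] unfolding ys_def by simp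
    moreover have "violated_cycle (G m) w r ys"
      unfolding ys_def using violated_cycle_rotate[OF _ w_sym m(3)] G_sym by blast
    moreover have "wval V w m \<in> edge_weight w ys ` {..<length ys}"
      using m(4) edge_weight_rotate_image[of w "Suc t" xs] unfolding ys_def by simp
    moreover have "length ys \<le> length xs" "m < K" using m less.prems unfolding ys_def by simp_all
    ultimately show False
      using bad_vertex_last[OF m(1) \<open>m < K\<close>, of ys] t by simp
  qed
qed

end

theorem corollary1:
  fixes N :: "'a set" and r :: 'a and w :: "'a \<Rightarrow> 'a \<Rightarrow> real"
  assumes "finite N" and "r \<notin> N"
    and "\<And>x y. w x y = w y x"
  defines "V \<equiv> insert r N"
  defines "k \<equiv> card (weight_values V w)"
  shows "(\<forall>i. 1 \<le> i \<and> i < k \<longrightarrow>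
            (\<forall>xs. \<not> bad_hole (Gadj V w i) r xs) \<and>
            (\<forall>a b c d. \<not> bad_diamond (Gadj V w i) w r a b c d))
     \<longleftrightarrow> (\<forall>i. 1 \<le> i \<and> i < k \<longrightarrow> (\<forall>xs. \<not> violated_cycle (Gadj V w i) w r xs))"
proof
  interpret weighted_complete_graph V w
    using assms(1,3) unfolding V_def by unfold_locales simp_all
  assume no_bad: "\<forall>i. 1 \<le> i \<and> i < k \<longrightarrow>
      (\<forall>xs. \<not> bad_hole (G i) r xs) \<and> (\<forall>a b c d. \<not> bad_diamond (G i) w r a b c d)"
  interpret no_bad_subgraphs V w r
    using no_bad unfolding k_def by unfold_locales blast+
  show "\<forall>i. 1 \<le> i \<and> i < k \<longrightarrow> (\<forall>xs. \<not> violated_cycle (G i) w r xs)"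
    using no_violated_cycle unfolding k_def by blast
next
  assume no_violated: "\<forall>i. 1 \<le> i \<and> i < k \<longrightarrow> (\<forall>xs. \<not> violated_cycle (Gadj V w i) w r xs)"
  show "\<forall>i. 1 \<le> i \<and> i < k \<longrightarrow>
      (\<forall>xs. \<not> bad_hole (Gadj V w i) r xs) \<and> (\<forall>a b c d. \<not> bad_diamond (Gadj V w i) w r a b c d)"
  proof (intro allI impI conjI notI)
    fix i xs assume "1 \<le> i \<and> i < k" "bad_hole (Gadj V w i) r xs"
    then show False using no_violated violated_if_bad_hole[of "Gadj V w i" r xs w] by blast
  next
    fix i a b c d assume "1 \<le> i \<and> i < k" "bad_diamond (Gadj V w i) w r a b c d"
    then show False using no_violated violated_if_bad_diamond[of "Gadj V w i" w r a b c d] by blast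
  qed
qed

end
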